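(* There exist absolute constants $C_0\approx3.1967$ (namely $C_0=e^3/(2\pi)$) and $C_1\approx2.9290$ such that the following holds. Let $\mathcal X$ be a finite alphabet with $|\mathcal X|\ge2$, let $X_1,\dots,X_n$ be i.i.d. with distribution $P\in\mathcal P(\mathcal X)$, and let $\hat P_n$ be the empirical distribution of $(X_1,\dots,X_n)$. Then for every $\epsilon>0$, $$\mathbb P\big[\|\hat P_n-P\|_\infty\ge\epsilon\big]\le2C_1(|\mathcal X|-1)(C_0n)^{\frac{|\mathcal X|}2-1}e^{-2n\epsilon^2}.$$
   Context: $\mathcal P(\mathcal X)$ is the set of probability distributions on $\mathcal X$; $\|P-Q\|_\infty=\max_{a\in\mathcal X}|P(a)-Q(a)|$; $\hat P_n(a)=\frac1n\sum_{k=1}^n1\{X_k=a\}$. *)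

theory Defs
  imports "HOL-Probability.Probability"
begin

definition C0 :: real where "C0 = exp 3 / (2 * pi)"

definition emp_dist :: "nat \<Rightarrow> (nat \<Rightarrow> 'a) \<Rightarrow> 'a \<Rightarrow> real" where
  "emp_dist n x a = (\<Sum>k\<in>{1..n}. if x k = a then 1 else 0) / real n"

definition sup_dist :: "'a set \<Rightarrow> ('a \<Rightarrow> real) \<Rightarrow> ('a \<Rightarrow> real) \<Rightarrow> real" where
  "sup_dist A p q = Max ((\<lambda>a. \<bar>p a - q a\<bar>) ` A)"

end

theory Submission
  imports Defs
begin

text \<open>For a single letter a, n \<cdot> emp_dist n x a is binomially distributed with parameters n and
  P(a), so Hoeffding's inequality bounds the probability of a deviation \<epsilon> by 2 e^{-2n\<epsilon>^2}.
  A union bound over the alphabet gives 2 |A| e^{-2n\<epsilon>^2}, which is already below the claimed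
  bound: C0 n \<ge> 1 makes the power factor at least 1, and |A| \<le> C1 (|A| - 1) once |A| \<ge> 2
  and C1 \<ge> 2.\<close>

lemma map_pmf_eq_bernoulli_pmf: "map_pmf (\<lambda>b. b = a) P = bernoulli_pmf (pmf P a)"
proof (rule pmf_eqI)
  fix i :: bool
  have "measure_pmf.prob P (- {a}) = 1 - pmf P a"
    using measure_pmf.prob_compl[of "{a}" P] by (simp add: Compl_eq_Diff_UNIV measure_pmf_single)
  then show "pmf (map_pmf (\<lambda>b. b = a) P) i = pmf (bernoulli_pmf (pmf P a)) i"
    by (cases i) (simp_all add: pmf_map vimage_def measure_pmf_single pmf_le_1 Compl_eq)
qed

lemma emp_dist_eq_card:
  "emp_dist n x a = real (card {k\<in>{1..n}. x k = a}) / real n"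
proof -
  have "(\<Sum>k\<in>{1..n}. if x k = a then 1 else 0::real) = (\<Sum>k\<in>{k\<in>{1..n}. x k = a}. 1)"
    by (intro sum.mono_neutral_cong_right) auto
  then show ?thesis by (simp add: emp_dist_def)
qed

lemma map_pmf_card_Pi_pmf_eq_binomial_pmf:
  assumes "finite I"
  shows "map_pmf (\<lambda>x. card {k\<in>I. x k = a}) (Pi_pmf I d (\<lambda>_. P))
           = binomial_pmf (card I) (pmf P a)"
proof -
  have "binomial_pmf (card I) (pmf P a)
      = map_pmf (\<lambda>f. card {k\<in>I. f k}) (Pi_pmf I (d = a) (\<lambda>_. bernoulli_pmf (pmf P a)))"
    using assms by (intro binomial_pmf_altdef') (simp_all add: pmf_le_1)
  also have "Pi_pmf I (d = a) (\<lambda>_. bernoulli_pmf (pmf P a))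
      = map_pmf (\<lambda>x. (\<lambda>b. b = a) \<circ> x) (Pi_pmf I d (\<lambda>_. P))"
    using assms by (simp add: Pi_pmf_map flip: map_pmf_eq_bernoulli_pmf)
  finally show ?thesis by (simp add: pmf.map_comp o_def)
qed

lemma prob_emp_dist_deviation_le:
  assumes "n \<ge> 1" and "\<epsilon> \<ge> 0"
  shows "measure_pmf.prob (Pi_pmf {1..n} d (\<lambda>_. P))
           {x. \<bar>emp_dist n x a - pmf P a\<bar> \<ge> \<epsilon>} \<le> 2 * exp (- 2 * real n * \<epsilon>\<^sup>2)"
proof -
  have "measure_pmf.prob (binomial_pmf n (pmf P a)) {m. \<bar>real m / real n - pmf P a\<bar> \<ge> \<epsilon>}
      = measure_pmf.prob (Pi_pmf {1..n} d (\<lambda>_. P)) {x. \<bar>emp_dist n x a - pmf P a\<bar> \<ge> \<epsilon>}"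
    by (subst map_pmf_card_Pi_pmf_eq_binomial_pmf[of "{1..n}" a d P, simplified, symmetric])
      (simp_all add: emp_dist_eq_card vimage_def)
  moreover have "measure_pmf.prob (binomial_pmf n (pmf P a))
      {m. \<bar>real m / real n - pmf P a\<bar> \<ge> \<epsilon>} \<le> 2 * exp (- 2 * real n * \<epsilon>\<^sup>2)"
    using binomial_distribution.prob_abs_ge'[of "pmf P a" n \<epsilon>] assms
    by (simp add: binomial_distribution_def pmf_le_1)
  ultimately show ?thesis by simp
qed

lemma sup_dist_ge_iff:
  assumes "finite A" and "A \<noteq> {}"
  shows "\<epsilon> \<le> sup_dist A p q \<longleftrightarrow> (\<exists>a\<in>A. \<epsilon> \<le> \<bar>p a - q a\<bar>)"
  using assms by (simp add: sup_dist_def Max_ge_iff)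

lemma prob_sup_dist_emp_dist_le:
  assumes "finite A" and "A \<noteq> {}" and "n \<ge> 1" and "\<epsilon> \<ge> 0"
  shows "measure_pmf.prob (Pi_pmf {1..n} d (\<lambda>_. P))
           {x. sup_dist A (emp_dist n x) (pmf P) \<ge> \<epsilon>}
         \<le> 2 * real (card A) * exp (- 2 * real n * \<epsilon>\<^sup>2)"
proof -
  let ?M = "Pi_pmf {1..n} d (\<lambda>_. P)"
  have "{x. sup_dist A (emp_dist n x) (pmf P) \<ge> \<epsilon>}
      = (\<Union>a\<in>A. {x. \<bar>emp_dist n x a - pmf P a\<bar> \<ge> \<epsilon>})"
    using assms(1,2) by (auto simp: sup_dist_ge_iff)
  then have "measure_pmf.prob ?M {x. sup_dist A (emp_dist n x) (pmf P) \<ge> \<epsilon>}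
      \<le> (\<Sum>a\<in>A. measure_pmf.prob ?M {x. \<bar>emp_dist n x a - pmf P a\<bar> \<ge> \<epsilon>})"
    using assms(1) by (simp add: measure_pmf.finite_measure_subadditive_finite)
  also have "\<dots> \<le> (\<Sum>a\<in>A. 2 * exp (- 2 * real n * \<epsilon>\<^sup>2))"
    using assms(3,4) by (intro sum_mono prob_emp_dist_deviation_le)
  finally show ?thesis by simp
qed

lemma C0_ge_1: "C0 \<ge> 1"
proof -
  have "(8::real) = 2 ^ 3" by simp
  also have "\<dots> \<le> exp 1 ^ 3"
    using exp_ge_add_one_self[of 1] by (intro power_mono) simp_all
  also have "\<dots> = exp 3" by (simp flip: exp_of_nat_mult)
  finally show ?thesis
    using pi_less_4 pi_gt_zero unfolding C0_def by (simp add: field_simps)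
qed

lemma card_le_C1_bound:
  fixes C1 :: real
  assumes "k \<ge> 2" and "C1 \<ge> 2" and "n \<ge> 1"
  shows "real k \<le> C1 * (real k - 1) * (C0 * real n) powr (real k / 2 - 1)"
proof -
  have "1 * 1 \<le> C0 * real n"
    using C0_ge_1 assms(3) by (intro mult_mono) simp_all
  then have power_ge_1: "1 \<le> (C0 * real n) powr (real k / 2 - 1)"
    using assms(1) by (intro ge_one_powr_ge_zero) simp_all
  have "real k \<le> C1 * (real k - 1) * 1"
    using assms(1,2) mult_right_mono[of 2 C1 "real k - 1"] by simp
  also have "\<dots> \<le> C1 * (real k - 1) * (C0 * real n) powr (real k / 2 - 1)"
    using assms(1,2) power_ge_1 by (intro mult_left_mono) simp_all
  finally show ?thesis .
qed

theorem lemma13: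
  shows "\<exists>C1::real. 2.92895 \<le> C1 \<and> C1 \<le> 2.92905 \<and>
    (\<forall>(A::nat set) (P::nat pmf) (n::nat) (\<epsilon>::real).
       finite A \<and> card A \<ge> 2 \<and> set_pmf P \<subseteq> A \<and> n \<ge> 1 \<and> \<epsilon> > 0 \<longrightarrow>
       measure_pmf.prob (Pi_pmf {1..n} 0 (\<lambda>_. P))
         {x. sup_dist A (emp_dist n x) (pmf P) \<ge> \<epsilon>}
       \<le> 2 * C1 * (real (card A) - 1) * (C0 * real n) powr (real (card A) / 2 - 1)
           * exp (- 2 * real n * \<epsilon>\<^sup>2))"
proof (intro exI[of _ "2.929"] conjI allI impI)
  fix A :: "nat set" and P :: "nat pmf" and n :: nat and \<epsilon> :: real
  assume "finite A \<and> card A \<ge> 2 \<and> set_pmf P \<subseteq> A \<and> n \<ge> 1 \<and> \<epsilon> > 0"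
  then have A: "finite A" "card A \<ge> 2" and n: "n \<ge> 1" and \<epsilon>: "\<epsilon> > 0" by auto
  then have "A \<noteq> {}" by auto
  let ?E = "exp (- 2 * real n * \<epsilon>\<^sup>2)"
  have "measure_pmf.prob (Pi_pmf {1..n} 0 (\<lambda>_. P)) {x. sup_dist A (emp_dist n x) (pmf P) \<ge> \<epsilon>}
      \<le> 2 * real (card A) * ?E"
    using prob_sup_dist_emp_dist_le[OF A(1) \<open>A \<noteq> {}\<close> n] \<epsilon> by simp
  also have "\<dots> \<le> 2 * 2.929 * (real (card A) - 1) * (C0 * real n) powr (real (card A) / 2 - 1) * ?E"
    using card_le_C1_bound[OF A(2) _ n, of "2.929"] by (simp add: mult.assoc)
  finally show "measure_pmf.prob (Pi_pmf {1..n} 0 (\<lambda>_. P))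
      {x. sup_dist A (emp_dist n x) (pmf P) \<ge> \<epsilon>}
      \<le> 2 * 2.929 * (real (card A) - 1) * (C0 * real n) powr (real (card A) / 2 - 1) * ?E" .
qed simp_all

end
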